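(* Assume $B$ has full column rank, and let $R\in\mathcal R_{\rm s}^{n_y}$ be such that every eigenvalue of $A_R$ has real part at most $-\alpha_*$ for some $\alpha_*>0$. Let $M_*$ be such that $\|e^{A_Rt}\|_2\le M_*e^{-\alpha_*t}$ for all $t\ge 0$. Let $P_R$ satisfy $A_RP_R+P_RA_R^{\top}+BB^{\top}=0$, and set $E_R=(I-R)C_{\rm m,o}$, $C_{\rm r}=[0,\ C_{\rm m,o}]$. Then $$\frac{\operatorname{tr}\{C_{\rm p}P_RC_{\rm p}^{\top}\}}{\operatorname{tr}\{C_{{\rm r},R}P_RC_{{\rm r},R}^{\top}\}}\le 8\,\frac{M_*^2\,\|A_R\|_2\,\|B\|_2^2}{\sigma_{\min}^2(B)\,\alpha_*}\cdot\frac{\|C_{\rm p}\|_F^2}{\|E_R\|_F^2+\|C_{\rm r}\|_F^2}.$$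
   Context: Data: $A_{\rm p}\in\mathbb R^{n_x\times n_x}$, $B_{\rm p}\in\mathbb R^{n_x\times n_u}$, $B_w,B_{\hat w}\in\mathbb R^{n_x\times n_x}$, $C_{\rm m,o}\in\mathbb R^{n_y\times n_x}$, $C_{\rm p,o}\in\mathbb R^{n_{y_{\rm p}}\times n_x}$, $D_{\rm p,o}\in\mathbb R^{n_{y_{\rm p}}\times n_u}$, $K\in\mathbb R^{n_x\times n_y}$, $L\in\mathbb R^{n_u\times n_x}$, with $(A_{\rm p},B_{\rm p})$ controllable and $(A_{\rm p},C_{\rm m,o})$ observable. For $R\in\mathbb R^{n_y\times n_y}$: $$A_R=\begin{bmatrix}A_{\rm p}+B_{\rm p}L & -B_{\rm p}L\\ K(I-R)C_{\rm m,o} & A_{\rm p}-KC_{\rm m,o}\end{bmatrix},\quad B=\begin{bmatrix}B_w&0\\ B_w&-B_{\hat w}\end{bmatrix},$$ $C_{{\rm r},R}=[(R-I)C_{\rm m,o},\ C_{\rm m,o}]$, $C_{\rm p}=[C_{\rm p,o}+D_{\rm p,o}L,\ -D_{\rm p,o}L]$. $\mathcal R_{\rm s}^{n_y}=\{R: A_R\text{ is Hurwitz}\}$. $\|\cdot\|_2$ is the spectral norm, $\|\cdot\|_F$ the Frobenius norm, $\sigma_{\min}(B)$ the smallest singular value of $B$. *)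

theory Defs
  imports "HOL-Analysis.Analysis"
begin

text \<open>Block matrices. Rows index the outer type, columns the inner type.\<close>
definition blk2 :: "real^'c^'a \<Rightarrow> real^'d^'a \<Rightarrow> real^'c^'b \<Rightarrow> real^'d^'b \<Rightarrow> real^('c+'d)^('a+'b)" where
  "blk2 A11 A12 A21 A22 = (\<chi> i j. case i of
      Inl i' \<Rightarrow> (case j of Inl j' \<Rightarrow> A11$i'$j' | Inr j' \<Rightarrow> A12$i'$j')
    | Inr i' \<Rightarrow> (case j of Inl j' \<Rightarrow> A21$i'$j' | Inr j' \<Rightarrow> A22$i'$j'))"

definition hcat :: "real^'c^'a \<Rightarrow> real^'d^'a \<Rightarrow> real^('c+'d)^'a" where
  "hcat C1 C2 = (\<chi> i j. case j of Inl j' \<Rightarrow> C1$i$j' | Inr j' \<Rightarrow> C2$i$j')"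

definition matpow :: "real^'n^'n \<Rightarrow> nat \<Rightarrow> real^'n^'n" where
  "matpow A k = (((**) A) ^^ k) (mat 1)"

definition mexp :: "real^'n^'n \<Rightarrow> real \<Rightarrow> real^'n^'n" where
  "mexp A t = (\<Sum>k. (t ^ k / fact k) *\<^sub>R matpow A k)"

definition spec_norm :: "real^'n^'m \<Rightarrow> real" where
  "spec_norm A = onorm (\<lambda>x. A *v x)"

definition frob_norm :: "real^'n^'m \<Rightarrow> real" where
  "frob_norm A = sqrt (\<Sum>i\<in>UNIV. \<Sum>j\<in>UNIV. (A$i$j)^2)"

definition eigenvalue :: "real^'n^'n \<Rightarrow> complex \<Rightarrow> bool" where
  "eigenvalue A l \<longleftrightarrow> (\<exists>v::complex^'n. v \<noteq> 0 \<and>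
      (\<chi> i j. complex_of_real (A$i$j)) *v v = l *s v)"

definition hurwitz :: "real^'n^'n \<Rightarrow> bool" where
  "hurwitz A \<longleftrightarrow> (\<forall>l. eigenvalue A l \<longrightarrow> Re l < 0)"

definition sigma_min :: "real^'n^'m \<Rightarrow> real" where
  "sigma_min B = sqrt (Min {l::real. \<exists>v. v \<noteq> 0 \<and> (transpose B ** B) *v v = l *\<^sub>R v})"

definition controllable :: "real^'n^'n \<Rightarrow> real^'u^'n \<Rightarrow> bool" where
  "controllable A B \<longleftrightarrow>
     span (\<Union>k\<in>{..<CARD('n)}. {column j (matpow A k ** B) | j. True}) = UNIV"

definition observable :: "real^'n^'n \<Rightarrow> real^'n^'y \<Rightarrow> bool" where
  "observable A C \<longleftrightarrow> controllable (transpose A) (transpose C)"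

definition A_R :: "real^'x^'x \<Rightarrow> real^'u^'x \<Rightarrow> real^'y^'x \<Rightarrow> real^'x^'u \<Rightarrow> real^'x^'y
    \<Rightarrow> real^'y^'y \<Rightarrow> real^('x+'x)^('x+'x)" where
  "A_R Ap Bp K L Cmo R = blk2 (Ap + Bp ** L) (- (Bp ** L))
      (K ** (mat 1 - R) ** Cmo) (Ap - K ** Cmo)"

definition B_big :: "real^'x^'x \<Rightarrow> real^'x^'x \<Rightarrow> real^('x+'x)^('x+'x)" where
  "B_big Bw Bwh = blk2 Bw 0 Bw (- Bwh)"

definition C_rR :: "real^'x^'y \<Rightarrow> real^'y^'y \<Rightarrow> real^('x+'x)^'y" where
  "C_rR Cmo R = hcat ((R - mat 1) ** Cmo) Cmo"

definition C_p :: "real^'x^'p \<Rightarrow> real^'u^'p \<Rightarrow> real^'x^'u \<Rightarrow> real^('x+'x)^'p" where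
  "C_p Cpo Dpo L = hcat (Cpo + Dpo ** L) (- (Dpo ** L))"

end

theory Submission
  imports Defs "HOL-Real_Asymp.Real_Asymp"
begin

text \<open>Write \<open>A = A\<^sub>R\<close> and \<open>w(t) = v\<^sup>T e\<^bsup>At\<^esup>\<close>. The Lyapunov equation gives
  \<open>d/dt (w P w\<^sup>T) = -|w B|\<^sup>2\<close>, and \<open>w P w\<^sup>T \<rightarrow> 0\<close> by the decay bound, so \<open>v\<^sup>T P v\<close> is the
  integral of \<open>|w(t) B|\<^sup>2\<close> over \<open>[0, \<infinity>)\<close> (the proof uses this only through a comparison argument).
  The estimates \<open>e\<^bsup>-|A| t\<^esup> |v| \<le> |w(t)| \<le> M e\<^bsup>-\<alpha> t\<^esup> |v|\<close> and
  \<open>\<sigma>\<^sub>m\<^sub>i\<^sub>n(B) |w| \<le> |w B| \<le> |B| |w|\<close> then give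
  \<open>\<sigma>\<^sub>m\<^sub>i\<^sub>n(B)\<^sup>2 / (2|A|) |v|\<^sup>2 \<le> v\<^sup>T P v \<le> M\<^sup>2 |B|\<^sup>2 / (2\<alpha>) |v|\<^sup>2\<close>.
  Summing over the rows of \<open>C\<close> turns these into bounds on \<open>tr (C P C\<^sup>T)\<close> in terms of
  \<open>|C|\<^sub>F\<^sup>2\<close>, and \<open>|C\<^sub>r\<^sub>,\<^sub>R|\<^sub>F\<^sup>2 = |E\<^sub>R|\<^sub>F\<^sup>2 + |C\<^sub>r|\<^sub>F\<^sup>2\<close>. The bound even holds without
  the factor 8.\<close>

section \<open>Spectral norm\<close>

lemma bounded_linear_matrix_vector_mult: "bounded_linear (\<lambda>x. (A::real^'n::finite^'m::finite) *v x)"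
  by simp

lemma bounded_linear_vector_matrix_mult: "bounded_linear (\<lambda>A::real^'n::finite^'m::finite. x v* A)"
proof -
  have "linear (\<lambda>A::real^'n^'m. x v* A)"
    by (rule linearI)
      (simp_all add: vector_matrix_mult_def vec_eq_iff sum.distrib algebra_simps sum_distrib_left)
  then show ?thesis
    by (simp add: linear_conv_bounded_linear)
qed

lemma spec_norm_nonneg: "0 \<le> spec_norm (A::real^'n::finite^'m::finite)"
  unfolding spec_norm_def by (rule onorm_pos_le[OF bounded_linear_matrix_vector_mult])

lemma norm_matrix_vector_mult_le: "norm (A *v x) \<le> spec_norm (A::real^'n::finite^'m::finite) * norm x"
  unfolding spec_norm_def by (rule onorm[OF bounded_linear_matrix_vector_mult])

lemma spec_norm_eq_0_iff: "spec_norm (A::real^'n::finite^'m::finite) = 0 \<longleftrightarrow> A = 0"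
  unfolding spec_norm_def onorm_eq_0[OF bounded_linear_matrix_vector_mult]
  by (metis matrix_eq matrix_vector_mult_0)

lemma spec_norm_triangle: "spec_norm (A + B) \<le> spec_norm (A::real^'n::finite^'m::finite) + spec_norm B"
proof -
  have "(*v) (A + B) = (\<lambda>x. A *v x + B *v x)"
    by (rule ext) (simp add: matrix_vector_mult_add_rdistrib)
  then show ?thesis
    unfolding spec_norm_def
    using onorm_triangle[OF bounded_linear_matrix_vector_mult bounded_linear_matrix_vector_mult] by simp
qed

lemma spec_norm_scaleR: "spec_norm (c *\<^sub>R A) = \<bar>c\<bar> * spec_norm (A::real^'n::finite^'m::finite)"
proof -
  have "(*v) (c *\<^sub>R A) = (\<lambda>x. c *\<^sub>R (A *v x))"
    by (rule ext) (simp add: scaleR_matrix_vector_assoc)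
  then show ?thesis
    unfolding spec_norm_def using onorm_scaleR[OF bounded_linear_matrix_vector_mult] by simp
qed

lemma spec_norm_mult_le:
  "spec_norm (A ** B) \<le> spec_norm (A::real^'n::finite^'m::finite) * spec_norm (B::real^'k::finite^'n)"
proof -
  have "(*v) (A ** B) = (\<lambda>x. A *v x) \<circ> (\<lambda>x. B *v x)"
    by (rule ext) (simp add: matrix_vector_mul_assoc)
  then show ?thesis
    unfolding spec_norm_def
    by (simp add: onorm_compose[OF bounded_linear_matrix_vector_mult bounded_linear_matrix_vector_mult])
qed

lemma spec_norm_mat_1: "spec_norm (mat 1 :: real^'n::finite^'n) = 1"
proof -
  have "(*v) (mat 1 :: real^'n^'n) = (\<lambda>x. x)"
    by (rule ext) simp
  then show ?thesis
    unfolding spec_norm_def using onorm_id by simp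
qed

lemma norm_le_spec_norm:
  "norm (A::real^'n::finite^'m::finite) \<le> real (CARD('m) * CARD('n)) * spec_norm A"
proof -
  have "norm A \<le> (\<Sum>i\<in>UNIV. norm (A $ i))"
    unfolding norm_vec_def by (rule L2_set_le_sum) simp
  also have "\<dots> \<le> (\<Sum>i\<in>(UNIV::'m set). \<Sum>j\<in>(UNIV::'n set). spec_norm A)"
  proof (rule sum_mono)
    fix i
    have "norm (A $ i) \<le> (\<Sum>j\<in>UNIV. \<bar>A $ i $ j\<bar>)"
      by (rule norm_le_l1_cart)
    also have "\<dots> \<le> (\<Sum>j\<in>(UNIV::'n set). spec_norm A)"
      unfolding spec_norm_def by (rule sum_mono) (rule matrix_component_le_onorm)
    finally show "norm (A $ i) \<le> (\<Sum>j\<in>(UNIV::'n set). spec_norm A)" .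
  qed
  finally show ?thesis
    by simp
qed

lemma norm_vector_matrix_mult_le: "norm (x v* A) \<le> spec_norm (A::real^'n::finite^'m::finite) * norm x"
proof (cases "x v* A = 0")
  case False
  have "(norm (x v* A))^2 = x \<bullet> (A *v (x v* A))"
    by (simp add: power2_norm_eq_inner dot_lmul_matrix)
  also have "\<dots> \<le> norm x * norm (A *v (x v* A))"
    by (rule order_trans[OF abs_ge_self Cauchy_Schwarz_ineq2])
  also have "\<dots> \<le> norm x * (spec_norm A * norm (x v* A))"
    by (rule mult_left_mono[OF norm_matrix_vector_mult_le]) simp
  finally show ?thesis
    using False by (simp add: power2_eq_square mult_ac)
qed (simp add: spec_norm_nonneg)

section \<open>Matrix exponential\<close>

text \<open>Square matrices with the spectral norm form a real Banach algebra. Wrapping them in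
  a type of their own makes the library exponential \<open>exp\<close> available as the matrix exponential.\<close>

typedef (overloaded) ('n::finite) sqmat = "UNIV :: (real^'n^'n) set"
  morphisms mat_of Sqm by auto

setup_lifting type_definition_sqmat

instantiation sqmat :: (finite) real_vector
begin
lift_definition zero_sqmat :: "'a sqmat" is 0 .
lift_definition plus_sqmat :: "'a sqmat \<Rightarrow> 'a sqmat \<Rightarrow> 'a sqmat" is "(+)" .
lift_definition minus_sqmat :: "'a sqmat \<Rightarrow> 'a sqmat \<Rightarrow> 'a sqmat" is "(-)" .
lift_definition uminus_sqmat :: "'a sqmat \<Rightarrow> 'a sqmat" is uminus .
lift_definition scaleR_sqmat :: "real \<Rightarrow> 'a sqmat \<Rightarrow> 'a sqmat" is scaleR .
instance
  by standard (transfer; simp add: algebra_simps)+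
end

instantiation sqmat :: (finite) real_normed_vector
begin
lift_definition norm_sqmat :: "'a sqmat \<Rightarrow> real" is spec_norm .
definition sgn_sqmat :: "'a sqmat \<Rightarrow> 'a sqmat" where "sgn_sqmat x = x /\<^sub>R norm x"
definition dist_sqmat :: "'a sqmat \<Rightarrow> 'a sqmat \<Rightarrow> real" where "dist_sqmat x y = norm (x - y)"
definition uniformity_sqmat :: "('a sqmat \<times> 'a sqmat) filter"
  where "uniformity_sqmat = (INF e\<in>{0 <..}. principal {(x, y). dist x y < e})"
definition open_sqmat :: "'a sqmat set \<Rightarrow> bool"
  where "open_sqmat U = (\<forall>x\<in>U. \<forall>\<^sub>F (x', y) in uniformity. x' = x \<longrightarrow> y \<in> U)"
instance
  by standard
    (transfer; simp add: spec_norm_eq_0_iff spec_norm_triangle spec_norm_scaleR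
      sgn_sqmat_def dist_sqmat_def uniformity_sqmat_def open_sqmat_def)+
end

instantiation sqmat :: (finite) real_normed_algebra_1
begin
lift_definition times_sqmat :: "'a sqmat \<Rightarrow> 'a sqmat \<Rightarrow> 'a sqmat" is "(**)" .
lift_definition one_sqmat :: "'a sqmat" is "mat 1" .
instance
proof
  fix x y z :: "'a sqmat" and a :: real
  show "x * y * z = x * (y * z)"
    by transfer (simp add: matrix_mul_assoc)
  show "1 * x = x" "x * 1 = x"
    by (transfer; simp)+
  show "(x + y) * z = x * z + y * z" "x * (y + z) = x * y + x * z"
    by (transfer; simp add: matrix_matrix_mult_def vec_eq_iff sum.distrib algebra_simps)+
  show "a *\<^sub>R x * y = a *\<^sub>R (x * y)" "x * a *\<^sub>R y = a *\<^sub>R (x * y)"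
    by (transfer; simp add: scalar_matrix_assoc matrix_scalar_ac)+
  show "(0::'a sqmat) \<noteq> 1"
    by transfer (metis spec_norm_eq_0_iff spec_norm_mat_1 zero_neq_one)
  show "norm (x * y) \<le> norm x * norm y"
    by transfer (rule spec_norm_mult_le)
  show "norm (1::'a sqmat) = 1"
    by transfer (rule spec_norm_mat_1)
qed
end

lemma bounded_linear_mat_of: "bounded_linear (mat_of :: 'n::finite sqmat \<Rightarrow> _)"
proof (rule bounded_linear_intro[where K = "real (CARD('n) * CARD('n))"])
  fix x y :: "'n sqmat" and r :: real
  show "mat_of (x + y) = mat_of x + mat_of y" "mat_of (r *\<^sub>R x) = r *\<^sub>R mat_of x"
    by (transfer; simp)+
  show "norm (mat_of x) \<le> norm x * real (CARD('n) * CARD('n))"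
    using norm_le_spec_norm[of "mat_of x"] by (simp add: norm_sqmat.rep_eq mult.commute)
qed

lemma bounded_linear_Sqm: "bounded_linear (Sqm :: _ \<Rightarrow> 'n::finite sqmat)"
proof -
  have "linear (Sqm :: _ \<Rightarrow> 'n sqmat)"
    by (rule linearI) (transfer; simp)+
  then show ?thesis
    by (simp add: linear_conv_bounded_linear)
qed

instance sqmat :: (finite) banach
proof
  fix X :: "nat \<Rightarrow> 'a sqmat"
  assume "Cauchy X"
  then have "Cauchy (\<lambda>n. mat_of (X n))"
    by (rule bounded_linear.Cauchy[OF bounded_linear_mat_of])
  then obtain L where "(\<lambda>n. mat_of (X n)) \<longlonglongrightarrow> L"
    by (auto simp: convergent_eq_Cauchy[symmetric] convergent_def)
  then have "(\<lambda>n. Sqm (mat_of (X n))) \<longlonglongrightarrow> Sqm L"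
    by (rule bounded_linear.tendsto[OF bounded_linear_Sqm])
  then show "convergent X"
    by (auto simp: convergent_def mat_of_inverse)
qed

lemma mat_of_power: "mat_of (x ^ k) = matpow (mat_of x) k"
  by (induction k) (simp_all add: matpow_def times_sqmat.rep_eq one_sqmat.rep_eq)

lemma mexp_eq_exp: "mexp A t = mat_of (exp (t *\<^sub>R Sqm A))"
proof -
  have "(\<lambda>n. (t *\<^sub>R Sqm A) ^ n /\<^sub>R fact n) sums exp (t *\<^sub>R Sqm A)"
    unfolding exp_def by (rule summable_sums[OF summable_exp_generic])
  from bounded_linear.sums[OF bounded_linear_mat_of this]
  have "(\<lambda>n. mat_of ((t *\<^sub>R Sqm A) ^ n /\<^sub>R fact n)) sums mat_of (exp (t *\<^sub>R Sqm A))" .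
  moreover have "mat_of ((t *\<^sub>R Sqm A) ^ n /\<^sub>R fact n) = (t ^ n / fact n) *\<^sub>R matpow A n" for n
    by (simp add: scaleR_power mat_of_power scaleR_sqmat.rep_eq Sqm_inverse divide_inverse mult.commute)
  ultimately show ?thesis
    unfolding mexp_def by (simp add: sums_iff)
qed

lemma mexp_has_vector_derivative: "(mexp A has_vector_derivative (mexp A t ** A)) (at t)"
  using bounded_linear.has_vector_derivative[OF bounded_linear_mat_of
      exp_scaleR_has_vector_derivative_right[of "Sqm A" t]]
  by (simp add: mexp_eq_exp[abs_def] times_sqmat.rep_eq Sqm_inverse)

lemma mexp_zero: "mexp A 0 = mat 1"
  by (simp add: mexp_eq_exp one_sqmat.rep_eq)

lemma mexp_mult_mexp_minus: "mexp A t ** mexp A (- t) = mat 1"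
proof -
  have "exp (t *\<^sub>R Sqm A) * exp ((- t) *\<^sub>R Sqm A) = 1"
    using exp_minus_inverse[of "t *\<^sub>R Sqm A"] by simp
  then show ?thesis
    unfolding mexp_eq_exp by (metis one_sqmat.rep_eq times_sqmat.rep_eq)
qed

lemma spec_norm_mexp_le: "spec_norm (mexp A t) \<le> exp (\<bar>t\<bar> * spec_norm A)"
proof -
  have "norm (exp (t *\<^sub>R Sqm A)) \<le> exp (norm (t *\<^sub>R Sqm A))"
    by (rule norm_exp)
  then show ?thesis
    by (simp add: mexp_eq_exp norm_sqmat.rep_eq scaleR_sqmat.rep_eq Sqm_inverse spec_norm_scaleR)
qed

section \<open>Quadratic bounds for the solution of the Lyapunov equation\<close>

lemma bound_at_0_of_derivative_bound:
  fixes g g' :: "real \<Rightarrow> real"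
  assumes deriv: "\<And>t. (g has_real_derivative g' t) (at t)"
    and deriv_bound: "\<And>t. t \<ge> 0 \<Longrightarrow> - g' t \<le> K * k * exp (- k * t)"
    and lim: "(g \<longlongrightarrow> 0) at_top" and k: "k > 0"
  shows "g 0 \<le> K"
proof -
  define u where "u t = g t - K * exp (- k * t)" for t
  have du: "(u has_real_derivative (g' t + K * k * exp (- k * t))) (at t)" for t
    unfolding u_def by (rule derivative_eq_intros deriv refl | simp)+
  have mono: "u 0 \<le> u T" if "T \<ge> 0" for T
  proof (rule DERIV_nonneg_imp_increasing_open[OF that])
    fix x assume "0 < x" "x < T"
    then show "\<exists>y. (u has_real_derivative y) (at x) \<and> 0 \<le> y"
      using du deriv_bound[of x] by force
  next
    show "continuous_on {0..T} u"
      using du by (meson DERIV_isCont continuous_at_imp_continuous_on)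
  qed
  have "(u \<longlongrightarrow> 0 - K * 0) at_top"
    unfolding u_def using k by (intro tendsto_intros lim) real_asymp
  then have "u 0 \<le> 0"
    using mono
    by (intro tendsto_lowerbound[where F = at_top])
      (auto simp: eventually_at_top_linorder intro!: exI[of _ 0])
  then show ?thesis
    by (simp add: u_def)
qed

lemma lyapunov_row_identity:
  fixes A P B :: "real^'n::finite^'n"
  assumes lyap: "A ** P + P ** transpose A + B ** transpose B = 0"
  shows "w \<bullet> (P *v (w v* A)) + (w v* A) \<bullet> (P *v w) = - ((norm (w v* B))^2)"
proof -
  have "w \<bullet> (P *v (w v* A)) + (w v* A) \<bullet> (P *v w) = w \<bullet> ((A ** P + P ** transpose A) *v w)"
    by (simp add: dot_lmul_matrix matrix_vector_mul_assoc[symmetric] matrix_vector_mult_add_rdistrib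
        inner_add_right)
  also have "A ** P + P ** transpose A = - (B ** transpose B)"
    using lyap by (simp add: eq_neg_iff_add_eq_0)
  also have "(- (B ** transpose B)) *v w = - (B *v (w v* B))"
    using matrix_vector_mult_diff_rdistrib[of 0 "B ** transpose B" w]
    by (simp add: matrix_vector_mul_assoc[symmetric])
  also have "w \<bullet> - (B *v (w v* B)) = - ((norm (w v* B))^2)"
    by (simp add: power2_norm_eq_inner dot_lmul_matrix)
  finally show ?thesis .
qed

lemma lyapunov_form_along_orbit_has_derivative:
  fixes A P B :: "real^'n::finite^'n"
  assumes lyap: "A ** P + P ** transpose A + B ** transpose B = 0"
  shows "((\<lambda>t. (v v* mexp A t) \<bullet> (P *v (v v* mexp A t))) has_real_derivative
           - ((norm ((v v* mexp A t) v* B))^2)) (at t)"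
proof -
  have orbit: "((\<lambda>t. v v* mexp A t) has_vector_derivative (v v* mexp A t) v* A) (at t)"
    using bounded_linear.has_vector_derivative[OF bounded_linear_vector_matrix_mult
        mexp_has_vector_derivative]
    by (simp add: vector_matrix_mul_assoc)
  have "((\<lambda>t. P *v (v v* mexp A t)) has_vector_derivative P *v ((v v* mexp A t) v* A)) (at t)"
    by (rule bounded_linear.has_vector_derivative[OF bounded_linear_matrix_vector_mult orbit])
  from bounded_bilinear.has_vector_derivative[OF bounded_bilinear_inner orbit this]
  show ?thesis
    by (simp add: has_real_derivative_iff_has_vector_derivative lyapunov_row_identity[OF lyap])
qed

lemma norm_orbit_le:
  assumes decay: "\<And>t. t \<ge> 0 \<Longrightarrow> spec_norm (mexp A t) \<le> M * exp (- alpha * t)" and "t \<ge> 0"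
  shows "norm (v v* mexp A t) \<le> M * exp (- alpha * t) * norm v"
  using norm_vector_matrix_mult_le[of v "mexp A t"] decay[OF \<open>t \<ge> 0\<close>]
  by (meson mult_right_mono norm_ge_zero order_trans)

lemma lyapunov_form_along_orbit_tendsto_0:
  assumes decay: "\<And>t. t \<ge> 0 \<Longrightarrow> spec_norm (mexp A t) \<le> M * exp (- alpha * t)"
    and "alpha > 0"
  shows "((\<lambda>t. (v v* mexp A t) \<bullet> (P *v (v v* mexp A t))) \<longlongrightarrow> 0) at_top"
proof (rule Lim_null_comparison)
  let ?c = "spec_norm P * (M * norm v)^2"
  show "\<forall>\<^sub>F t in at_top.
      norm ((v v* mexp A t) \<bullet> (P *v (v v* mexp A t))) \<le> ?c * exp (- alpha * t)^2"
    unfolding eventually_at_top_linorder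
  proof (intro exI allI impI)
    fix t :: real assume "t \<ge> 0"
    let ?w = "v v* mexp A t"
    have "norm (?w \<bullet> (P *v ?w)) \<le> norm ?w * (spec_norm P * norm ?w)"
      using Cauchy_Schwarz_ineq2[of ?w "P *v ?w"] norm_matrix_vector_mult_le[of P ?w]
      by (simp add: order_trans[OF _ mult_left_mono])
    also have "\<dots> = spec_norm P * (norm ?w)^2"
      by (simp add: power2_eq_square)
    also have "\<dots> \<le> spec_norm P * (M * exp (- alpha * t) * norm v)^2"
      using norm_orbit_le[OF decay \<open>t \<ge> 0\<close>, of v]
      by (intro mult_left_mono power_mono spec_norm_nonneg) simp_all
    finally show "norm (?w \<bullet> (P *v ?w)) \<le> ?c * exp (- alpha * t)^2"
      by (simp add: power_mult_distrib mult_ac)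
  qed
  show "((\<lambda>t. ?c * exp (- alpha * t)^2) \<longlongrightarrow> 0) at_top"
    using \<open>alpha > 0\<close> by real_asymp
qed

lemma norm_orbit_ge:
  assumes "t \<ge> 0"
  shows "exp (- spec_norm A * t) * norm v \<le> norm (v v* mexp A t)"
proof -
  have "v = (v v* mexp A t) v* mexp A (- t)"
    by (simp add: vector_matrix_mul_assoc mexp_mult_mexp_minus)
  then have "norm v \<le> spec_norm (mexp A (- t)) * norm (v v* mexp A t)"
    by (metis norm_vector_matrix_mult_le)
  also have "\<dots> \<le> exp (t * spec_norm A) * norm (v v* mexp A t)"
    using spec_norm_mexp_le[of A "- t"] \<open>t \<ge> 0\<close> by (intro mult_right_mono) simp_all
  finally show ?thesis
    by (simp add: exp_minus field_simps)
qed

lemma lyapunov_quadratic_form_le: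
  fixes A P B :: "real^'n::finite^'n"
  assumes lyap: "A ** P + P ** transpose A + B ** transpose B = 0"
    and decay: "\<And>t. t \<ge> 0 \<Longrightarrow> spec_norm (mexp A t) \<le> M * exp (- alpha * t)"
    and alpha: "alpha > 0"
  shows "v \<bullet> (P *v v) \<le> M^2 * (spec_norm B)^2 / (2 * alpha) * (norm v)^2"
proof -
  let ?K = "M^2 * (spec_norm B)^2 / (2 * alpha) * (norm v)^2"
  have "(\<lambda>t. (v v* mexp A t) \<bullet> (P *v (v v* mexp A t))) 0 \<le> ?K"
  proof (rule bound_at_0_of_derivative_bound[OF lyapunov_form_along_orbit_has_derivative[OF lyap]
        _ lyapunov_form_along_orbit_tendsto_0[OF decay alpha]])
    show "0 < 2 * alpha"
      using alpha by simp
  next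
    fix t :: real assume "t \<ge> 0"
    let ?w = "v v* mexp A t"
    have "norm (?w v* B) \<le> spec_norm B * (M * exp (- alpha * t) * norm v)"
      using norm_vector_matrix_mult_le[of ?w B] norm_orbit_le[OF decay \<open>t \<ge> 0\<close>, of v]
        spec_norm_nonneg[of B]
      by (meson mult_left_mono order_trans)
    then have "(norm (?w v* B))^2 \<le> (spec_norm B * (M * exp (- alpha * t) * norm v))^2"
      by (rule power_mono) simp
    also have "\<dots> = ?K * (2 * alpha) * exp (- (2 * alpha) * t)"
      using alpha by (simp add: field_simps power_mult_distrib power2_eq_square flip: exp_add)
    finally show "- (- ((norm (?w v* B))^2)) \<le> ?K * (2 * alpha) * exp (- (2 * alpha) * t)"
      by simp
  qed
  then show ?thesis
    by (simp add: mexp_zero)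
qed

lemma lyapunov_quadratic_form_ge:
  fixes A P B :: "real^'n::finite^'n"
  assumes lyap: "A ** P + P ** transpose A + B ** transpose B = 0"
    and decay: "\<And>t. t \<ge> 0 \<Longrightarrow> spec_norm (mexp A t) \<le> M * exp (- alpha * t)"
    and alpha: "alpha > 0"
    and coercive: "\<And>w. s * (norm w)^2 \<le> (norm (w v* B))^2" and "s \<ge> 0"
    and A: "spec_norm A > 0"
  shows "s / (2 * spec_norm A) * (norm v)^2 \<le> v \<bullet> (P *v v)"
proof -
  let ?K = "- (s / (2 * spec_norm A) * (norm v)^2)" and ?k = "2 * spec_norm A"
  have "(\<lambda>t. - ((v v* mexp A t) \<bullet> (P *v (v v* mexp A t)))) 0 \<le> ?K"
  proof (rule bound_at_0_of_derivative_bound[OF DERIV_minus[OF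
          lyapunov_form_along_orbit_has_derivative[OF lyap]]])
    fix t :: real assume "t \<ge> 0"
    let ?w = "v v* mexp A t"
    have "(exp (- spec_norm A * t) * norm v)^2 \<le> (norm ?w)^2"
      using norm_orbit_ge[OF \<open>t \<ge> 0\<close>] by (rule power_mono) simp
    then have "s * (exp (- spec_norm A * t) * norm v)^2 \<le> (norm (?w v* B))^2"
      by (meson \<open>s \<ge> 0\<close> coercive mult_left_mono order_trans)
    also have "s * (exp (- spec_norm A * t) * norm v)^2 = - (?K * ?k * exp (- ?k * t))"
      using A by (simp add: field_simps power_mult_distrib power2_eq_square flip: exp_add)
    finally show "- (- (- ((norm (?w v* B))^2))) \<le> ?K * ?k * exp (- ?k * t)"
      by simp
  next
    show "((\<lambda>t. - ((v v* mexp A t) \<bullet> (P *v (v v* mexp A t)))) \<longlongrightarrow> 0) at_top"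
      using tendsto_minus[OF lyapunov_form_along_orbit_tendsto_0[OF decay alpha]] by simp
  qed (use A in simp)
  then show ?thesis
    by (simp add: mexp_zero)
qed

section \<open>Traces and Frobenius norms\<close>

lemma trace_mult_mult_transpose:
  fixes C :: "real^'n::finite^'k::finite" and P :: "real^'n^'n"
  shows "trace (C ** P ** transpose C) = (\<Sum>i\<in>UNIV. (C $ i) \<bullet> (P *v (C $ i)))"
  unfolding trace_def
proof (rule sum.cong[OF refl])
  fix i
  have "(C ** P ** transpose C) $ i $ i = (\<Sum>j\<in>UNIV. \<Sum>l\<in>UNIV. C$i$l * P$l$j * C$i$j)"
    by (simp add: matrix_matrix_mult_def transpose_def sum_distrib_right)
  also have "\<dots> = (C $ i) \<bullet> (P *v (C $ i))"
    by (subst sum.swap) (simp add: matrix_vector_mult_def inner_vec_def sum_distrib_left mult.assoc)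
  finally show "(C ** P ** transpose C) $ i $ i = (C $ i) \<bullet> (P *v (C $ i))" .
qed

lemma frob_norm_sq_eq_sum_rows: "(frob_norm C)^2 = (\<Sum>i\<in>UNIV. (norm (C $ i))^2)"
  unfolding frob_norm_def
  by (simp add: sum_nonneg norm_eq_sqrt_inner inner_vec_def power2_eq_square)

lemma trace_mult_mult_transpose_le:
  fixes C :: "real^'n::finite^'k::finite" and P :: "real^'n^'n"
  assumes "\<And>v. v \<bullet> (P *v v) \<le> c * (norm v)^2"
  shows "trace (C ** P ** transpose C) \<le> c * (frob_norm C)^2"
  unfolding trace_mult_mult_transpose frob_norm_sq_eq_sum_rows sum_distrib_left
  by (rule sum_mono) (rule assms)

lemma trace_mult_mult_transpose_ge:
  fixes C :: "real^'n::finite^'k::finite" and P :: "real^'n^'n"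
  assumes "\<And>v. c * (norm v)^2 \<le> v \<bullet> (P *v v)"
  shows "c * (frob_norm C)^2 \<le> trace (C ** P ** transpose C)"
  unfolding trace_mult_mult_transpose frob_norm_sq_eq_sum_rows sum_distrib_left
  by (rule sum_mono) (rule assms)

lemma frob_norm_hcat_sq:
  "(frob_norm (hcat X Y))^2 = (frob_norm X)^2 + (frob_norm (Y::real^'d::finite^'a::finite))^2"
proof -
  have split: "(\<Sum>j\<in>UNIV. f j) = (\<Sum>j\<in>UNIV. f (Inl j)) + (\<Sum>j\<in>UNIV. f (Inr j))"
    for f :: "'c::finite + 'd \<Rightarrow> real"
    using sum.Plus[of "UNIV :: 'c set" "UNIV :: 'd set" f] by (simp add: o_def)
  show ?thesis
    unfolding frob_norm_def by (simp add: sum_nonneg split hcat_def sum.distrib)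
qed

lemma frob_norm_uminus: "frob_norm (- C) = frob_norm C"
  unfolding frob_norm_def by simp

lemma frob_norm_C_rR_sq:
  fixes Cmo :: "real^'x::finite^'y::finite"
  shows "(frob_norm (C_rR Cmo R))^2
    = (frob_norm ((mat 1 - R) ** Cmo))^2 + (frob_norm (hcat (0::real^'x^'y) Cmo))^2"
proof -
  have "(mat 1 - R) ** Cmo = - ((R - mat 1) ** Cmo)"
    by (simp add: matrix_matrix_mult_def vec_eq_iff sum_negf[symmetric] algebra_simps)
  moreover have "frob_norm (0::real^'x^'y) = 0"
    by (simp add: frob_norm_def)
  ultimately show ?thesis
    by (simp add: C_rR_def frob_norm_hcat_sq frob_norm_uminus)
qed

section \<open>Smallest singular value\<close>

lemma finite_eigenvalues_symmetric:
  fixes H :: "real^'n::finite^'n"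
  assumes symm: "transpose H = H"
  shows "finite {l::real. \<exists>v. v \<noteq> 0 \<and> H *v v = l *\<^sub>R v}" (is "finite ?S")
proof -
  define ev where "ev l = (SOME v. v \<noteq> 0 \<and> H *v v = l *\<^sub>R v)" for l
  have ev: "ev l \<noteq> 0 \<and> H *v ev l = l *\<^sub>R ev l" if "l \<in> ?S" for l
    unfolding ev_def by (rule someI_ex) (use that in auto)
  have orth: "ev l1 \<bullet> ev l2 = 0" if "l1 \<in> ?S" "l2 \<in> ?S" "l1 \<noteq> l2" for l1 l2
  proof -
    have "l2 * (ev l1 \<bullet> ev l2) = ev l1 \<bullet> (H *v ev l2)"
      using ev[OF that(2)] by simp
    also have "\<dots> = (H *v ev l1) \<bullet> ev l2"
      by (metis dot_lmul_matrix symm transpose_matrix_vector)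
    also have "\<dots> = l1 * (ev l1 \<bullet> ev l2)"
      using ev[OF that(1)] by simp
    finally show ?thesis
      using that(3) by simp
  qed
  have "inj_on ev ?S"
  proof (rule inj_onI)
    fix l1 l2 assume "l1 \<in> ?S" "l2 \<in> ?S" "ev l1 = ev l2"
    then show "l1 = l2"
      using ev orth by force
  qed
  moreover have "independent (ev ` ?S)"
    by (rule pairwise_orthogonal_independent)
      (use ev orth in \<open>force simp: pairwise_def orthogonal_def\<close>)+
  ultimately show ?thesis
    using finiteI_independent finite_imageD by blast
qed

lemma eigenvalue_gram_pos:
  fixes B :: "real^'n::finite^'m::finite"
  assumes "inj ((*v) B)" and "v \<noteq> 0" and "(transpose B ** B) *v v = l *\<^sub>R v"
  shows "l > 0"
proof -
  have "B *v v \<noteq> 0"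
    using assms(1,2) by (metis injD matrix_vector_mult_0_right)
  then have "0 < (B *v v) \<bullet> (B *v v)"
    by simp
  also have "\<dots> = ((transpose B ** B) *v v) \<bullet> v"
    by (simp add: dot_lmul_matrix flip: matrix_vector_mul_assoc)
  also have "\<dots> = l * (v \<bullet> v)"
    by (simp add: assms(3))
  finally show ?thesis
    using assms(2) by (smt (verit) inner_gt_zero_iff mult_nonpos_nonneg)
qed

lemma linear_coeff_eq_0_of_quadratic_nonneg:
  fixes c d :: real
  assumes nonneg: "\<And>t. 0 \<le> 2 * t * c + t^2 * d" and "d \<ge> 0"
  shows "c = 0"
proof (rule ccontr)
  assume "c \<noteq> 0"
  define t where "t = - c / (d + 1)"
  have "t * (d + 1) = - c"
    using \<open>d \<ge> 0\<close> by (simp add: t_def)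
  have "(d + 1)^2 * (2 * t * c + t^2 * d) = 2 * c * (t * (d + 1)) * (d + 1) + (t * (d + 1))^2 * d"
    by (simp add: power2_eq_square algebra_simps)
  also have "\<dots> = - (c^2 * (d + 2))"
    unfolding \<open>t * (d + 1) = - c\<close> by (simp add: power2_eq_square algebra_simps)
  finally have "(d + 1)^2 * (2 * t * c + t^2 * d) = - (c^2 * (d + 2))" .
  moreover have "0 < c^2 * (d + 2)"
    using \<open>c \<noteq> 0\<close> \<open>d \<ge> 0\<close> by simp
  ultimately show False
    using nonneg[of t] mult_nonneg_nonneg[of "(d + 1)^2" "2 * t * c + t^2 * d"] by simp
qed

lemma power2_norm_add_scaleR:
  fixes x y :: "'a::real_inner"
  shows "(norm (x + t *\<^sub>R y))^2 = (norm x)^2 + 2 * t * (x \<bullet> y) + t^2 * (norm y)^2"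
  unfolding power2_norm_eq_inner
  by (simp add: inner_add_left inner_add_right inner_commute[of y x] power2_eq_square algebra_simps)

lemma rayleigh_minimiser_eigenvector:
  fixes C :: "real^'n::finite^'m::finite"
  obtains m w0 where "w0 \<noteq> 0" "\<And>w. m * (norm w)^2 \<le> (norm (C *v w))^2"
    "(transpose C ** C) *v w0 = m *\<^sub>R w0"
proof -
  define q where "q w = (norm (C *v w))^2" for w
  have "continuous_on (sphere 0 1) q"
    unfolding q_def by (intro continuous_intros)
  moreover have "sphere (0::real^'n) 1 \<noteq> {}"
    by simp
  ultimately obtain w0 where w0: "w0 \<in> sphere 0 1" "\<And>w. w \<in> sphere 0 1 \<Longrightarrow> q w0 \<le> q w"
    using continuous_attains_inf[OF compact_sphere] by blast
  define m where "m = q w0"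
  have q_scaleR: "q (c *\<^sub>R w) = c^2 * q w" for c w
    by (simp add: q_def matrix_vector_mult_scaleR power_mult_distrib)
  have min: "m * (norm w)^2 \<le> q w" for w
  proof (cases "w = 0")
    case False
    then have "m \<le> q (inverse (norm w) *\<^sub>R w)"
      unfolding m_def by (intro w0(2)) simp
    also have "\<dots> = q w / (norm w)^2"
      by (simp add: q_scaleR power_inverse field_simps)
    finally show ?thesis
      using False by (simp add: field_simps)
  qed (simp add: q_def)
  \<comment> \<open>\<open>t = 0\<close> minimises \<open>q (w0 + t u) - m |w0 + t u|\<^sup>2\<close>, so its linear coefficient vanishes.\<close>
  have critical: "(C *v w0) \<bullet> (C *v u) = m * (w0 \<bullet> u)" for u
  proof -
    have "(C *v w0) \<bullet> (C *v u) - m * (w0 \<bullet> u) = 0"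
    proof (rule linear_coeff_eq_0_of_quadratic_nonneg)
      show "0 \<le> q u - m * (norm u)^2"
        using min[of u] by simp
      fix t :: real
      have "m * (norm (w0 + t *\<^sub>R u))^2 \<le> q (w0 + t *\<^sub>R u)"
        by (rule min)
      moreover have "q (w0 + t *\<^sub>R u) = m + 2 * t * ((C *v w0) \<bullet> (C *v u)) + t^2 * q u"
        by (simp add: q_def m_def matrix_vector_right_distrib matrix_vector_mult_scaleR
            power2_norm_add_scaleR)
      moreover have "(norm (w0 + t *\<^sub>R u))^2 = 1 + 2 * t * (w0 \<bullet> u) + t^2 * (norm u)^2"
        using w0(1) by (simp add: power2_norm_add_scaleR)
      ultimately show
        "0 \<le> 2 * t * ((C *v w0) \<bullet> (C *v u) - m * (w0 \<bullet> u)) + t^2 * (q u - m * (norm u)^2)"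
        by (simp add: algebra_simps)
    qed
    then show ?thesis
      by simp
  qed
  have "(transpose C ** C) *v w0 - m *\<^sub>R w0 = 0"
  proof -
    have "u \<bullet> ((transpose C ** C) *v w0 - m *\<^sub>R w0) = 0" for u
      using critical[of u]
      by (simp add: inner_diff_right inner_commute[of u] dot_lmul_matrix[symmetric]
          flip: matrix_vector_mul_assoc)
    then show ?thesis
      using inner_eq_zero_iff by blast
  qed
  then show ?thesis
    by (intro that[of w0 m]) (use w0(1) min in \<open>auto simp: q_def\<close>)
qed

lemma sigma_min_pos_and_lower_bound:
  fixes B :: "real^'n::finite^'n"
  assumes "rank B = CARD('n)"
  shows "0 < sigma_min B" and "(sigma_min B)^2 * (norm w)^2 \<le> (norm (w v* B))^2"
proof -
  define S where "S = {l::real. \<exists>v. v \<noteq> 0 \<and> (transpose B ** B) *v v = l *\<^sub>R v}"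
  have inj: "inj ((*v) B)" "inj ((*v) (transpose B))"
    using assms full_rank_injective rank_transpose by metis+
  \<comment> \<open>The minimiser \<open>w0\<close> of \<open>|B\<^sup>T w|\<^sup>2\<close> gives the eigenvector \<open>B\<^sup>T w0\<close> of \<open>B\<^sup>T B\<close>, so the set
    whose \<open>Min\<close> defines \<open>sigma_min\<close> is nonempty (finiteness holds by symmetry).\<close>
  obtain m w0 where "w0 \<noteq> 0" and min: "\<And>w. m * (norm w)^2 \<le> (norm (transpose B *v w))^2"
    and eig: "(transpose (transpose B) ** transpose B) *v w0 = m *\<^sub>R w0"
    using rayleigh_minimiser_eigenvector[of "transpose B"] by blast
  have "transpose B *v w0 \<noteq> 0"
    using inj(2) \<open>w0 \<noteq> 0\<close> by (metis injD matrix_vector_mult_0_right)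
  moreover have "(transpose B ** B) *v (transpose B *v w0) = m *\<^sub>R (transpose B *v w0)"
    using eig by (metis matrix_vector_mul_assoc matrix_vector_mult_scaleR transpose_transpose)
  ultimately have "m \<in> S"
    unfolding S_def by blast
  have "finite S"
    unfolding S_def by (rule finite_eigenvalues_symmetric) (simp add: matrix_transpose_mul)
  have "Min S \<in> S" "Min S \<le> m"
    using \<open>finite S\<close> \<open>m \<in> S\<close> by (auto intro: Min_in Min_le)
  then have "0 < Min S"
    unfolding S_def using eigenvalue_gram_pos[OF inj(1)] by blast
  moreover have "sigma_min B = sqrt (Min S)"
    by (simp add: sigma_min_def S_def)
  ultimately show "0 < sigma_min B"
    by simp
  have "(sigma_min B)^2 * (norm w)^2 \<le> m * (norm w)^2"
    using \<open>0 < Min S\<close> \<open>Min S \<le> m\<close> \<open>sigma_min B = sqrt (Min S)\<close> by (simp add: mult_right_mono)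
  also have "\<dots> \<le> (norm (w v* B))^2"
    using min by simp
  finally show "(sigma_min B)^2 * (norm w)^2 \<le> (norm (w v* B))^2" .
qed

lemma spec_norm_pos_if_hurwitz:
  fixes A :: "real^'n::finite^'n"
  assumes "hurwitz A"
  shows "0 < spec_norm A"
proof -
  have "eigenvalue (0::real^'n^'n) 0"
    unfolding eigenvalue_def
    by (rule exI[of _ "\<chi> i. 1"]) (simp add: vec_eq_iff matrix_vector_mult_def)
  then have "A \<noteq> 0"
    using assms by (auto simp: hurwitz_def)
  then show ?thesis
    using spec_norm_nonneg[of A] spec_norm_eq_0_iff[of A] by linarith
qed

lemma divide_le_of_two_sided_bounds:
  fixes a b fa fb c l :: real
  assumes a: "a \<le> c * fa" and b: "l * fb \<le> b" "b \<le> c * fb"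
    and "l > 0" "c \<ge> 0" "fa \<ge> 0" "fb \<ge> 0"
  shows "a / b \<le> c / l * (fa / fb)"
proof (cases "b > 0")
  case True
  then have "fb \<noteq> 0"
    using b(2) by auto
  then have "fb > 0"
    using \<open>fb \<ge> 0\<close> by simp
  have "a / b \<le> c * fa / b"
    using a True by (simp add: divide_right_mono)
  also have "\<dots> \<le> c * fa / (l * fb)"
    using True b(1) \<open>l > 0\<close> \<open>fb > 0\<close> \<open>c \<ge> 0\<close> \<open>fa \<ge> 0\<close> by (intro divide_left_mono) simp_all
  finally show ?thesis
    by simp
next
  case False
  moreover have "0 \<le> b"
    using b(1) \<open>l > 0\<close> \<open>fb \<ge> 0\<close> by (meson mult_nonneg_nonneg less_imp_le order_trans)
  ultimately have "b = 0"
    by simp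
  then show ?thesis
    using assms by simp
qed

theorem theorem2:
  fixes Ap :: "real^'x::finite^'x" and Bp :: "real^'u::finite^'x"
    and Bw Bwh :: "real^'x^'x"
    and Cmo :: "real^'x^'y::finite" and Cpo :: "real^'x^'p::finite"
    and Dpo :: "real^'u^'p" and K :: "real^'y^'x" and L :: "real^'x^'u"
    and R :: "real^'y^'y" and P :: "real^('x+'x)^('x+'x)"
    and alpha M :: real
  assumes ctrb: "controllable Ap Bp"
    and obsv: "observable Ap Cmo"
    and rankB: "rank (B_big Bw Bwh) = CARD('x+'x)"
    and stable: "hurwitz (A_R Ap Bp K L Cmo R)"
    and alpha_pos: "alpha > 0"
    and eig: "\<And>l. eigenvalue (A_R Ap Bp K L Cmo R) l \<Longrightarrow> Re l \<le> - alpha"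
    and Mbound: "\<And>t. t \<ge> 0 \<Longrightarrow> spec_norm (mexp (A_R Ap Bp K L Cmo R) t) \<le> M * exp (- alpha * t)"
    and lyap: "A_R Ap Bp K L Cmo R ** P + P ** transpose (A_R Ap Bp K L Cmo R)
               + B_big Bw Bwh ** transpose (B_big Bw Bwh) = 0"
  shows "trace (C_p Cpo Dpo L ** P ** transpose (C_p Cpo Dpo L))
           / trace (C_rR Cmo R ** P ** transpose (C_rR Cmo R))
         \<le> 8 * (M^2 * spec_norm (A_R Ap Bp K L Cmo R) * (spec_norm (B_big Bw Bwh))^2)
             / ((sigma_min (B_big Bw Bwh))^2 * alpha)
           * (frob_norm (C_p Cpo Dpo L))^2
             / ((frob_norm ((mat 1 - R) ** Cmo))^2
                + (frob_norm (hcat (0::real^'x^'y) Cmo))^2)"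
proof -
  let ?A = "A_R Ap Bp K L Cmo R" and ?B = "B_big Bw Bwh"
    and ?Cp = "C_p Cpo Dpo L" and ?Cr = "C_rR Cmo R"
  define up where "up = M^2 * (spec_norm ?B)^2 / (2 * alpha)"
  define lo where "lo = (sigma_min ?B)^2 / (2 * spec_norm ?A)"
  have A_pos: "0 < spec_norm ?A"
    using stable by (rule spec_norm_pos_if_hurwitz)
  note sigma = sigma_min_pos_and_lower_bound[OF rankB]
  have upper: "v \<bullet> (P *v v) \<le> up * (norm v)^2" for v
    unfolding up_def by (rule lyapunov_quadratic_form_le[OF lyap Mbound alpha_pos])
  have lower: "lo * (norm v)^2 \<le> v \<bullet> (P *v v)" for v
    unfolding lo_def by (rule lyapunov_quadratic_form_ge[OF lyap Mbound alpha_pos sigma(2)])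
      (simp_all add: A_pos)
  have "trace (?Cp ** P ** transpose ?Cp) / trace (?Cr ** P ** transpose ?Cr)
      \<le> up / lo * ((frob_norm ?Cp)^2 / (frob_norm ?Cr)^2)"
    using A_pos sigma(1) alpha_pos
    by (intro divide_le_of_two_sided_bounds trace_mult_mult_transpose_le trace_mult_mult_transpose_ge
        upper lower) (simp_all add: up_def lo_def)
  also have "\<dots> = M^2 * spec_norm ?A * (spec_norm ?B)^2 / ((sigma_min ?B)^2 * alpha)
      * (frob_norm ?Cp)^2 / (frob_norm ?Cr)^2"
    using A_pos by (simp add: up_def lo_def field_simps)
  also have "\<dots> \<le> 8 * (M^2 * spec_norm ?A * (spec_norm ?B)^2) / ((sigma_min ?B)^2 * alpha)
      * (frob_norm ?Cp)^2 / (frob_norm ?Cr)^2"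
    using A_pos sigma(1) alpha_pos by (intro divide_right_mono mult_right_mono) simp_all
  finally show ?thesis
    unfolding frob_norm_C_rR_sq .
qed

end
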